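(* Let $S=(X,\prec,\sqsubset)$ be an so-structure. Then the quotient structure $S/{\equiv_\sqsubset}:=\bigl(X/{\equiv_\sqsubset},\hat\prec,\hat\sqsubset\bigr)$ is an so-structure, both $\hat\prec$ and $\hat\sqsubset$ are partial orders on $X/{\equiv_\sqsubset}$, and for all $\alpha,\beta\in X$: (1) $\alpha\prec\beta \iff [\alpha]\,\hat\prec\,[\beta]$; (2) $\alpha\sqsubset\beta \iff [\alpha]\,\hat\sqsubset\,[\beta]\ \vee\ (\alpha\neq\beta\wedge[\alpha]=[\beta])$.
   Context: A stratified order structure (so-structure) is a triple $S=(X,\prec,\sqsubset)$ with $\prec,\sqsubset\subseteq X\times X$ such that for all $\alpha,\beta,\gamma\in X$: (S1) $\neg(\alpha\sqsubset\alpha)$; (S2) $\alpha\prec\beta\Rightarrow\alpha\sqsubset\beta$; (S3) $\alpha\sqsubset\beta\sqsubset\gamma\wedge\alpha\neq\gamma\Rightarrow\alpha\sqsubset\gamma$; (S4) $(\alpha\sqsubset\beta\wedge\beta\prec\gamma)\vee(\alpha\prec\beta\wedge\beta\sqsubset\gamma)\Rightarrow\alpha\prec\gamma$. For an so-structure, define $\alpha\equiv_\sqsubset\beta$ iff $\alpha=\beta$ or ($\alpha\sqsubset\beta$ and $\beta\sqsubset\alpha$); this is an equivalence relation on $X$, $[\alpha]$ denotes the class of $\alpha$, and $X/{\equiv_\sqsubset}$ the set of classes. On $X/{\equiv_\sqsubset}$ define $[\alpha]\,\hat\prec\,[\beta]$ iff $[\alpha]\neq[\beta]$ and $([\alpha]\times[\beta])\cap\prec\neq\emptyset$,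 and $[\alpha]\,\hat\sqsubset\,[\beta]$ iff $[\alpha]\neq[\beta]$ and $([\alpha]\times[\beta])\cap\sqsubset\neq\emptyset$. *)

theory Defs
  imports Main
begin

definition so_structure :: "'a set \<Rightarrow> ('a \<times> 'a) set \<Rightarrow> ('a \<times> 'a) set \<Rightarrow> bool" where
  "so_structure X P Q \<longleftrightarrow>
     P \<subseteq> X \<times> X \<and> Q \<subseteq> X \<times> X \<and>
     (\<forall>a\<in>X. (a, a) \<notin> Q) \<and>
     (\<forall>a\<in>X. \<forall>b\<in>X. (a, b) \<in> P \<longrightarrow> (a, b) \<in> Q) \<and>
     (\<forall>a\<in>X. \<forall>b\<in>X. \<forall>c\<in>X. (a, b) \<in> Q \<and> (b, c) \<in> Q \<and> a \<noteq> c \<longrightarrow> (a, c) \<in> Q) \<and>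
     (\<forall>a\<in>X. \<forall>b\<in>X. \<forall>c\<in>X.
        ((a, b) \<in> Q \<and> (b, c) \<in> P) \<or> ((a, b) \<in> P \<and> (b, c) \<in> Q) \<longrightarrow> (a, c) \<in> P)"

definition so_eq :: "'a set \<Rightarrow> ('a \<times> 'a) set \<Rightarrow> ('a \<times> 'a) set" where
  "so_eq X Q = {(a, b). a \<in> X \<and> b \<in> X \<and> (a = b \<or> ((a, b) \<in> Q \<and> (b, a) \<in> Q))}"

abbreviation so_class :: "'a set \<Rightarrow> ('a \<times> 'a) set \<Rightarrow> 'a \<Rightarrow> 'a set" where
  "so_class X Q a \<equiv> so_eq X Q `` {a}"

abbreviation so_quot :: "'a set \<Rightarrow> ('a \<times> 'a) set \<Rightarrow> 'a set set" where
  "so_quot X Q \<equiv> X // so_eq X Q"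

definition so_lift :: "'a set \<Rightarrow> ('a \<times> 'a) set \<Rightarrow> ('a \<times> 'a) set \<Rightarrow> ('a set \<times> 'a set) set" where
  "so_lift X Q R = {(A, B). A \<in> so_quot X Q \<and> B \<in> so_quot X Q \<and> A \<noteq> B \<and> (A \<times> B) \<inter> R \<noteq> {}}"

definition strict_partial_order_on :: "'b set \<Rightarrow> ('b \<times> 'b) set \<Rightarrow> bool" where
  "strict_partial_order_on Y R \<longleftrightarrow> R \<subseteq> Y \<times> Y \<and> irrefl R \<and> trans R"

end

theory Submission
  imports Defs
begin

(*
  The proof has three parts.
  1. Two facts valid in every so-structure: P is always a strict partial
     order, and Q is one as soon as it is asymmetric.
  2. Inside S: ~ is an equivalence (axiom S3), and P, as well as Q off the
     diagonal of ~, are invariant under replacing elements by equivalent ones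
     (axioms S3, S4).  For any such relation R, two classes are related by
     the lifted relation exactly when their representatives are related by R
     and not equivalent; this yields claims (1) and (2) of the theorem.
  3. Every axiom of the quotient reduces, via representatives, to the same
     axiom of S, so the quotient is an so-structure; its lifted Q is
     asymmetric, so by part 1 both lifted relations are strict partial orders.
*)

lemma so_sub:
  assumes "so_structure X P Q"
  shows "P \<subseteq> X \<times> X" and "Q \<subseteq> X \<times> X"
  using assms unfolding so_structure_def by blast+

lemma so_Q_irrefl: "so_structure X P Q \<Longrightarrow> (a, a) \<notin> Q"
  unfolding so_structure_def by blast

lemma so_P_imp_Q: "so_structure X P Q \<Longrightarrow> (a, b) \<in> P \<Longrightarrow> (a, b) \<in> Q"
  unfolding so_structure_def by blast

lemma so_Q_trans:
  "so_structure X P Q \<Longrightarrow> (a, b) \<in> Q \<Longrightarrow> (b, c) \<in> Q \<Longrightarrow> a \<noteq> c \<Longrightarrow> (a, c) \<in> Q"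
  unfolding so_structure_def by blast

lemma so_QP_trans: "so_structure X P Q \<Longrightarrow> (a, b) \<in> Q \<Longrightarrow> (b, c) \<in> P \<Longrightarrow> (a, c) \<in> P"
  unfolding so_structure_def by blast

lemma so_PQ_trans: "so_structure X P Q \<Longrightarrow> (a, b) \<in> P \<Longrightarrow> (b, c) \<in> Q \<Longrightarrow> (a, c) \<in> P"
  unfolding so_structure_def by blast

text \<open>The causality relation P of an so-structure is a strict partial order:
  irreflexivity comes from S1 and S2, transitivity from S2 and S4.\<close>

lemma so_P_strict_partial_order:
  assumes S: "so_structure X P Q"
  shows "strict_partial_order_on X P"
  unfolding strict_partial_order_on_def
proof (intro conjI)
  show "P \<subseteq> X \<times> X" using so_sub[OF S] by blast
  show "irrefl P" using so_Q_irrefl[OF S] so_P_imp_Q[OF S] unfolding irrefl_def by blast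
  show "trans P" using so_P_imp_Q[OF S] so_QP_trans[OF S] by (blast intro: transI)
qed

text \<open>The weak causality relation Q is transitive only up to the side condition
  of S3; that condition is vacuous when Q is asymmetric.\<close>

lemma so_Q_strict_partial_order:
  assumes S: "so_structure X P Q" and asym: "\<And>a b. (a, b) \<in> Q \<Longrightarrow> (b, a) \<notin> Q"
  shows "strict_partial_order_on X Q"
  unfolding strict_partial_order_on_def
proof (intro conjI)
  show "Q \<subseteq> X \<times> X" using so_sub[OF S] by blast
  show "irrefl Q" using so_Q_irrefl[OF S] unfolding irrefl_def by blast
  show "trans Q"
  proof (rule transI)
    fix a b c assume ab: "(a, b) \<in> Q" and bc: "(b, c) \<in> Q"
    have "a \<noteq> c" using asym ab bc by blast
    then show "(a, c) \<in> Q" using so_Q_trans[OF S ab bc] by blast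
  qed
qed

lemma so_lift_class_iff:
  assumes E: "equiv X (so_eq X Q)" and a: "a \<in> X" and b: "b \<in> X"
    and respects: "\<And>x y. (a, x) \<in> so_eq X Q \<Longrightarrow> (b, y) \<in> so_eq X Q \<Longrightarrow>
                    (x, y) \<in> R \<Longrightarrow> (x, y) \<notin> so_eq X Q \<Longrightarrow> (a, b) \<in> R"
  shows "(so_class X Q a, so_class X Q b) \<in> so_lift X Q R
         \<longleftrightarrow> (a, b) \<in> R \<and> (a, b) \<notin> so_eq X Q"
proof
  assume lift: "(so_class X Q a, so_class X Q b) \<in> so_lift X Q R"
  then have distinct: "so_class X Q a \<noteq> so_class X Q b"
    unfolding so_lift_def by blast
  from lift obtain x y where x: "(a, x) \<in> so_eq X Q" and y: "(b, y) \<in> so_eq X Q"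
    and xy: "(x, y) \<in> R"
    unfolding so_lift_def by blast
  have "so_class X Q x = so_class X Q a" "so_class X Q y = so_class X Q b"
    using equiv_class_eq[OF E x] equiv_class_eq[OF E y] by simp_all
  then have "(x, y) \<notin> so_eq X Q"
    using distinct equiv_class_eq[OF E] by metis
  then show "(a, b) \<in> R \<and> (a, b) \<notin> so_eq X Q"
    using respects[OF x y xy] distinct eq_equiv_class_iff[OF E a b] by blast
next
  assume "(a, b) \<in> R \<and> (a, b) \<notin> so_eq X Q"
  moreover have "a \<in> so_class X Q a" "b \<in> so_class X Q b"
    using equiv_class_self[OF E] a b by blast+
  ultimately show "(so_class X Q a, so_class X Q b) \<in> so_lift X Q R"
    using eq_equiv_class_iff[OF E a b] a b unfolding so_lift_def by (blast intro: quotientI)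
qed

context
  fixes X :: "'a set" and P Q :: "('a \<times> 'a) set"
  assumes S: "so_structure X P Q"
begin

lemma so_eq_iff: "(a, b) \<in> so_eq X Q \<longleftrightarrow> a \<in> X \<and> b \<in> X \<and> (a = b \<or> (a, b) \<in> Q \<and> (b, a) \<in> Q)"
  unfolding so_eq_def by blast

text \<open>Mutual Q-relatedness is transitive by S3 (the excluded case a = c is
  covered by equality), so the relation is an equivalence.\<close>

lemma so_eq_equiv: "equiv X (so_eq X Q)"
proof (rule equivI)
  show "so_eq X Q \<subseteq> X \<times> X" "refl_on X (so_eq X Q)"
    unfolding refl_on_def so_eq_def by blast+
  show "sym (so_eq X Q)" unfolding sym_def so_eq_def by blast
  show "trans (so_eq X Q)"
    unfolding so_eq_def using so_Q_trans[OF S] by (auto intro!: transI)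
qed

lemma so_eq_sym: "(a, b) \<in> so_eq X Q \<Longrightarrow> (b, a) \<in> so_eq X Q"
  using so_eq_equiv by (meson equivE symD)

lemma so_eq_trans: "(a, b) \<in> so_eq X Q \<Longrightarrow> (b, c) \<in> so_eq X Q \<Longrightarrow> (a, c) \<in> so_eq X Q"
  using so_eq_equiv by (meson equivE transD)

text \<open>P never relates equivalent elements: a P b together with b Q a would give
  a P a by S4, contradicting S1 and S2.\<close>

lemma so_P_not_eq: "(a, b) \<in> P \<Longrightarrow> (a, b) \<notin> so_eq X Q"
  using so_Q_irrefl[OF S] so_P_imp_Q[OF S] so_PQ_trans[OF S] unfolding so_eq_def by blast

text \<open>By S4, P is invariant under replacing either end by an equivalent element.\<close>

lemma so_P_respects:
  assumes x: "(a, x) \<in> so_eq X Q" and y: "(b, y) \<in> so_eq X Q" and xy: "(x, y) \<in> P"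
  shows "(a, b) \<in> P"
proof -
  have "(a, y) \<in> P"
    using x xy so_QP_trans[OF S] unfolding so_eq_def by auto
  then show ?thesis
    using y so_PQ_trans[OF S] unfolding so_eq_def by auto
qed

text \<open>By S3, Q is invariant in the same way, provided the replaced pair does not
  collapse into one class (the side condition of S3).\<close>

lemma so_Q_step_left:
  assumes "(a, x) \<in> so_eq X Q" and "(x, y) \<in> Q" and "(a, y) \<notin> so_eq X Q"
  shows "(a, y) \<in> Q"
  using assms so_Q_trans[OF S, of a x y] unfolding so_eq_def by auto

lemma so_Q_step_right:
  assumes "(x, y) \<in> Q" and "(b, y) \<in> so_eq X Q" and "(x, b) \<notin> so_eq X Q"
  shows "(x, b) \<in> Q"
  using assms so_Q_trans[OF S, of x y b] unfolding so_eq_def by auto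

lemma so_Q_respects:
  assumes x: "(a, x) \<in> so_eq X Q" and y: "(b, y) \<in> so_eq X Q"
    and xy: "(x, y) \<in> Q" and not_eq: "(x, y) \<notin> so_eq X Q"
  shows "(a, b) \<in> Q"
proof -
  have "(a, y) \<notin> so_eq X Q"
    using x not_eq so_eq_sym so_eq_trans by blast
  then have ay: "(a, y) \<in> Q"
    using so_Q_step_left[OF x xy] by blast
  have "(a, b) \<notin> so_eq X Q"
    using x y not_eq so_eq_sym so_eq_trans by blast
  then show ?thesis
    using so_Q_step_right[OF ay y] by blast
qed

lemma so_lift_P_iff:
  "a \<in> X \<Longrightarrow> b \<in> X \<Longrightarrow> (so_class X Q a, so_class X Q b) \<in> so_lift X Q P \<longleftrightarrow> (a, b) \<in> P"
  using so_lift_class_iff[OF so_eq_equiv, of a b P] so_P_respects so_P_not_eq by blast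

lemma so_lift_Q_iff:
  "a \<in> X \<Longrightarrow> b \<in> X \<Longrightarrow>
   (so_class X Q a, so_class X Q b) \<in> so_lift X Q Q \<longleftrightarrow> (a, b) \<in> Q \<and> (a, b) \<notin> so_eq X Q"
  using so_lift_class_iff[OF so_eq_equiv, of a b Q] so_Q_respects by blast

lemma so_Q_iff:
  assumes a: "a \<in> X" and b: "b \<in> X"
  shows "(a, b) \<in> Q \<longleftrightarrow> (so_class X Q a, so_class X Q b) \<in> so_lift X Q Q
           \<or> (a \<noteq> b \<and> so_class X Q a = so_class X Q b)"
  using so_lift_Q_iff[OF a b] eq_equiv_class_iff[OF so_eq_equiv a b] so_Q_irrefl[OF S]
    so_eq_iff[of a b] a b by blast

text \<open>Each axiom of the quotient is checked on representatives, where it is the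
  corresponding axiom of the original structure.\<close>

lemma so_quotient_so_structure:
  "so_structure (so_quot X Q) (so_lift X Q P) (so_lift X Q Q)"
  unfolding so_structure_def
proof (intro conjI ballI impI)
  show "so_lift X Q P \<subseteq> so_quot X Q \<times> so_quot X Q"
       "so_lift X Q Q \<subseteq> so_quot X Q \<times> so_quot X Q"
    unfolding so_lift_def by blast+
  fix A assume "A \<in> so_quot X Q"
  then show "(A, A) \<notin> so_lift X Q Q" unfolding so_lift_def by blast
next
  fix A B assume "A \<in> so_quot X Q" "B \<in> so_quot X Q" "(A, B) \<in> so_lift X Q P"
  then show "(A, B) \<in> so_lift X Q Q"
    using so_lift_P_iff so_lift_Q_iff so_P_imp_Q[OF S] so_P_not_eq
    by (auto elim!: quotientE)
next
  fix A B C assume "A \<in> so_quot X Q" "B \<in> so_quot X Q" "C \<in> so_quot X Q"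
    and AB_BC: "(A, B) \<in> so_lift X Q Q \<and> (B, C) \<in> so_lift X Q Q \<and> A \<noteq> C"
  then obtain a b c where abc: "a \<in> X" "b \<in> X" "c \<in> X"
    and classes: "A = so_class X Q a" "B = so_class X Q b" "C = so_class X Q c"
    by (metis quotientE)
  have "(a, b) \<in> Q" "(b, c) \<in> Q" "(a, c) \<notin> so_eq X Q"
    using AB_BC so_lift_Q_iff eq_equiv_class_iff[OF so_eq_equiv] abc unfolding classes by blast+
  moreover have "a \<noteq> c"
    using \<open>(a, c) \<notin> so_eq X Q\<close> abc(1) so_eq_iff by blast
  ultimately show "(A, C) \<in> so_lift X Q Q"
    using so_Q_trans[OF S] so_lift_Q_iff abc unfolding classes by blast
next
  fix A B C assume "A \<in> so_quot X Q" "B \<in> so_quot X Q" "C \<in> so_quot X Q"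
    and "(A, B) \<in> so_lift X Q Q \<and> (B, C) \<in> so_lift X Q P
         \<or> (A, B) \<in> so_lift X Q P \<and> (B, C) \<in> so_lift X Q Q"
  then show "(A, C) \<in> so_lift X Q P"
    using so_lift_P_iff so_lift_Q_iff so_QP_trans[OF S] so_PQ_trans[OF S]
    by (auto elim!: quotientE)
qed

text \<open>Mutually Q-related elements share a class, so the lifted Q is asymmetric.\<close>

lemma so_lift_Q_asym:
  assumes AB: "(A, B) \<in> so_lift X Q Q"
  shows "(B, A) \<notin> so_lift X Q Q"
proof
  assume BA: "(B, A) \<in> so_lift X Q Q"
  from AB have "A \<in> so_quot X Q" "B \<in> so_quot X Q"
    unfolding so_lift_def by blast+
  then obtain a b where ab: "a \<in> X" "b \<in> X"
    and classes: "A = so_class X Q a" "B = so_class X Q b"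
    by (metis quotientE)
  have "(a, b) \<in> Q" "(b, a) \<in> Q" "(a, b) \<notin> so_eq X Q"
    using AB BA so_lift_Q_iff ab unfolding classes by blast+
  then show False using ab so_eq_iff by blast
qed

end

theorem mainTheorem1:
  fixes X :: "'a set" and P Q :: "('a \<times> 'a) set"
  assumes "so_structure X P Q"
  shows "so_structure (so_quot X Q) (so_lift X Q P) (so_lift X Q Q)
    \<and> strict_partial_order_on (so_quot X Q) (so_lift X Q P)
    \<and> strict_partial_order_on (so_quot X Q) (so_lift X Q Q)
    \<and> (\<forall>a\<in>X. \<forall>b\<in>X.
         ((a, b) \<in> P \<longleftrightarrow> (so_class X Q a, so_class X Q b) \<in> so_lift X Q P)
       \<and> ((a, b) \<in> Q \<longleftrightarrow> (so_class X Q a, so_class X Q b) \<in> so_lift X Q Q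
            \<or> (a \<noteq> b \<and> so_class X Q a = so_class X Q b)))"
proof (intro conjI ballI)
  have quotient: "so_structure (so_quot X Q) (so_lift X Q P) (so_lift X Q Q)"
    using so_quotient_so_structure[OF assms] .
  then show "so_structure (so_quot X Q) (so_lift X Q P) (so_lift X Q Q)" .
  show "strict_partial_order_on (so_quot X Q) (so_lift X Q P)"
    using so_P_strict_partial_order[OF quotient] .
  show "strict_partial_order_on (so_quot X Q) (so_lift X Q Q)"
    using so_Q_strict_partial_order[OF quotient so_lift_Q_asym[OF assms]] .
  fix a b assume "a \<in> X" "b \<in> X"
  then show "(a, b) \<in> P \<longleftrightarrow> (so_class X Q a, so_class X Q b) \<in> so_lift X Q P"
    and "(a, b) \<in> Q \<longleftrightarrow> (so_class X Q a, so_class X Q b) \<in> so_lift X Q Q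
           \<or> (a \<noteq> b \<and> so_class X Q a = so_class X Q b)"
    using so_lift_P_iff[OF assms] so_Q_iff[OF assms] by blast+
qed

end
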